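(* Let $\mathcal{A}=\mathbb{C}\langle x,y,z\rangle/(x^2,y^2,z^2,xyz,yzx,zxy)$, graded by $\deg x=\deg y=\deg z=1$, and let $a_n=\dim\mathcal{A}_n$. Then $a_n=2a_{n-1}-a_{n-3}$ for all $n\ge 4$. *)

theory Defs
  imports Complex_Main "HOL-Library.Function_Algebras"
begin

text \<open>The free algebra C<x,y,z>: letters x,y,z are encoded as 0,1,2 and
  noncommutative monomials as words (nat lists) over these letters.\<close>

definition cscale :: "complex \<Rightarrow> ('a \<Rightarrow> complex) \<Rightarrow> ('a \<Rightarrow> complex)" where
  "cscale c f = (\<lambda>w. c * f w)"

lemma vector_space_cscale: "vector_space cscale"
  by unfold_locales (auto simp: cscale_def fun_eq_iff algebra_simps)

definition letters :: "nat set" where "letters = {0, 1, 2}"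

definition mon :: "nat list \<Rightarrow> (nat list \<Rightarrow> complex)" where
  "mon w = (\<lambda>u. if u = w then 1 else 0)"

definition words :: "nat \<Rightarrow> nat list set" where
  "words n = {w. length w = n \<and> set w \<subseteq> letters}"

definition rels :: "nat list set" where
  "rels = {[0,0], [1,1], [2,2], [0,1,2], [1,2,0], [2,0,1]}"

definition free_deg :: "nat \<Rightarrow> (nat list \<Rightarrow> complex) set" where
  "free_deg n = module.span cscale (mon ` words n)"

definition ideal_deg :: "nat \<Rightarrow> (nat list \<Rightarrow> complex) set" where
  "ideal_deg n = module.span cscale
     {mon (u @ r @ v) | u r v. r \<in> rels \<and> set u \<subseteq> letters \<and> set v \<subseteq> letters
                              \<and> length (u @ r @ v) = n}"

text \<open>a_n = dim A_n = dim (F_n / I_n) = dim F_n - dim I_n.\<close>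
definition a_dim :: "nat \<Rightarrow> nat" where
  "a_dim n = vector_space.dim cscale (free_deg n) - vector_space.dim cscale (ideal_deg n)"

end

theory Submission
  imports Defs "HOL-Library.Sublist"
begin

text \<open>All relations are monomials, so the normal words of length n (words over {0,1,2} that
  contain no relation as a factor) form a basis of A_n.  Reading letters mod 3, the relations
  forbid a repeated letter and any factor (a, a+1, a+2).  Hence a normal word a b c w either has
  a = b + 1, followed by the normal word b c w, or a = c and b = c + 1, followed by the normal
  word c w; conversely both prefixings preserve normality and never produce the same word.  So
  a_n = a_(n-1) + a_(n-2) for n \<ge> 3, and eliminating a_(n-2) between this recurrence at n and
  at n - 1 gives a_n = 2 a_(n-1) - a_(n-3).\<close>

lemma sum_apply: "(\<Sum>x\<in>A. f x) w = (\<Sum>x\<in>A. f x w)"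
  by (induction A rule: infinite_finite_induct) auto

lemma mon_apply: "mon v w = (if w = v then 1 else 0)"
  by (simp add: mon_def)

lemma inj_mon: "inj mon"
  by (rule injI) (metis mon_apply one_neq_zero)

lemma independent_mon: "\<not> module.dependent cscale (mon ` S)"
proof -
  interpret vector_space cscale by (rule vector_space_cscale)
  have "u v = 0"
    if t: "finite t" "t \<subseteq> mon ` S" and sum: "(\<Sum>x\<in>t. cscale (u x) x) = 0"
      and "v \<in> t" for t u v
  proof -
    obtain w where v: "v = mon w" using t(2) \<open>v \<in> t\<close> by blast
    have eval: "x w = (if x = v then 1 else 0)" if "x \<in> t" for x
      using \<open>x \<in> t\<close> \<open>t \<subseteq> mon ` S\<close> by (auto simp: v mon_apply)
    have "(\<Sum>x\<in>t. cscale (u x) x) w = (\<Sum>x\<in>t. if x = v then u x else 0)"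
      unfolding sum_apply cscale_def by (rule sum.cong) (simp_all add: eval)
    also have "\<dots> = u v"
      using t(1) \<open>v \<in> t\<close> by simp
    finally show ?thesis
      using sum by simp
  qed
  then show ?thesis
    unfolding independent_explicit_module by blast
qed

lemma dim_span_mon: "vector_space.dim cscale (module.span cscale (mon ` S)) = card S"
proof -
  interpret vector_space cscale by (rule vector_space_cscale)
  have "dim (span (mon ` S)) = card (mon ` S)"
    using independent_mon by (rule dim_span_eq_card_independent)
  also have "\<dots> = card S"
    using inj_mon by (simp add: card_image inj_on_def)
  finally show ?thesis .
qed

definition normal :: "nat list \<Rightarrow> bool" where
  "normal w \<longleftrightarrow> (\<forall>r\<in>rels. \<not> sublist r w)"

definition normal_words :: "nat \<Rightarrow> nat list set" where
  "normal_words n = {w \<in> words n. normal w}"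

lemma normal_Cons_iff: "normal (a # w) \<longleftrightarrow> (\<forall>r\<in>rels. \<not> prefix r (a # w)) \<and> normal w"
  by (auto simp: normal_def sublist_Cons_right)

lemma finite_words: "finite (words n)"
  using finite_lists_length_eq[of letters n] by (simp add: words_def letters_def conj_commute)

lemma Cons_in_words_iff: "a # w \<in> words (Suc n) \<longleftrightarrow> a < 3 \<and> w \<in> words n"
  by (auto simp: words_def letters_def)

lemma ideal_deg_eq_span_non_normal:
  "ideal_deg n = module.span cscale (mon ` {w \<in> words n. \<not> normal w})"
proof -
  have "set r \<subseteq> letters" if "r \<in> rels" for r
    using that by (auto simp: rels_def letters_def)
  then have "{mon (u @ r @ v) | u r v. r \<in> rels \<and> set u \<subseteq> letters \<and> set v \<subseteq> letters
                \<and> length (u @ r @ v) = n} = mon ` {w \<in> words n. \<not> normal w}"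
    by (fastforce simp: words_def normal_def sublist_def)
  then show ?thesis
    by (simp add: ideal_deg_def)
qed

lemma a_dim_eq_card_normal_words: "a_dim n = card (normal_words n)"
proof -
  have "a_dim n = card (words n) - card {w \<in> words n. \<not> normal w}"
    by (simp add: a_dim_def free_deg_def ideal_deg_eq_span_non_normal dim_span_mon)
  also have "\<dots> = card (words n - {w \<in> words n. \<not> normal w})"
    using finite_words by (subst card_Diff_subset) auto
  also have "words n - {w \<in> words n. \<not> normal w} = normal_words n"
    by (auto simp: normal_words_def)
  finally show ?thesis .
qed

definition succ3 :: "nat \<Rightarrow> nat" where
  "succ3 a = Suc a mod 3"

lemma succ3_less_3: "succ3 a < 3"
  by (simp add: succ3_def)

lemma succ3_neq:
  assumes "a < 3"
  shows "succ3 a \<noteq> a" "succ3 (succ3 a) \<noteq> a"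
  using assms unfolding succ3_def by presburger+

lemma less_3_cases: "(a::nat) < 3 \<Longrightarrow> a = 0 \<or> a = 1 \<or> a = 2"
  by auto

lemma normal_Cons_Cons_iff:
  assumes "a < 3"
  shows "normal (a # b # w) \<longleftrightarrow>
    b \<noteq> a \<and> \<not> (b = succ3 a \<and> prefix [succ3 b] w) \<and> normal (b # w)"
proof -
  have "(\<forall>r\<in>rels. \<not> prefix r (a # b # w)) \<longleftrightarrow> b \<noteq> a \<and> \<not> (b = succ3 a \<and> prefix [succ3 b] w)"
    using less_3_cases[OF assms] by (cases w) (auto simp: rels_def succ3_def)
  then show ?thesis
    by (simp add: normal_Cons_iff)
qed

definition prepend_succ :: "nat list \<Rightarrow> nat list" where
  "prepend_succ w = succ3 (hd w) # w"

definition prepend_zigzag :: "nat list \<Rightarrow> nat list" where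
  "prepend_zigzag w = hd w # succ3 (hd w) # w"

lemma normal_prepend_succ:
  assumes "normal (b # w)" "b < 3"
  shows "normal (prepend_succ (b # w))"
  using assms succ3_neq[OF assms(2)]
  by (simp add: prepend_succ_def normal_Cons_Cons_iff succ3_less_3)

lemma normal_prepend_zigzag:
  assumes "normal (c # w)" "c < 3"
  shows "normal (prepend_zigzag (c # w))"
  using normal_prepend_succ[OF assms] succ3_neq[OF assms(2)]
  by (simp add: prepend_zigzag_def prepend_succ_def normal_Cons_Cons_iff assms(2))

lemma normal_Cons3_cases:
  assumes "normal (a # b # c # w)" "a < 3" "b < 3" "c < 3"
  shows "a = succ3 b \<or> (a = c \<and> b = succ3 c)"
proof -
  have "b \<noteq> a" "c \<noteq> b" "\<not> (b = succ3 a \<and> c = succ3 b)"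
    using assms by (auto simp: normal_Cons_Cons_iff)
  then show ?thesis
    using less_3_cases[OF assms(2)] less_3_cases[OF assms(3)] less_3_cases[OF assms(4)]
    by (auto simp: succ3_def)
qed

lemma prepend_succ_neq_prepend_zigzag: "prepend_succ w \<noteq> prepend_zigzag v"
  using succ3_neq(2)[OF succ3_less_3, of "hd v"]
  by (auto simp: prepend_succ_def prepend_zigzag_def)

lemma inj_on_prepend_succ: "inj_on prepend_succ A"
  by (rule inj_onI) (simp add: prepend_succ_def)

lemma inj_on_prepend_zigzag: "inj_on prepend_zigzag A"
  by (rule inj_onI) (simp add: prepend_zigzag_def)

lemma normal_words_Suc3_eq:
  "normal_words (Suc (Suc (Suc m))) =
     prepend_succ ` normal_words (Suc (Suc m)) \<union> prepend_zigzag ` normal_words (Suc m)"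
proof (intro equalityI subsetI)
  fix x assume "x \<in> normal_words (Suc (Suc (Suc m)))"
  then obtain a b c w where x: "x = a # b # c # w" and letters: "a < 3" "b < 3" "c < 3"
    and "w \<in> words m" "normal x"
    by (auto simp: normal_words_def words_def letters_def length_Suc_conv)
  then have "b # c # w \<in> normal_words (Suc (Suc m))" "c # w \<in> normal_words (Suc m)"
    by (simp_all add: normal_words_def Cons_in_words_iff normal_Cons_iff)
  moreover have "x = prepend_succ (b # c # w) \<or> x = prepend_zigzag (c # w)"
    using normal_Cons3_cases[OF _ letters] \<open>normal x\<close>
    by (auto simp: x prepend_succ_def prepend_zigzag_def)
  ultimately show
    "x \<in> prepend_succ ` normal_words (Suc (Suc m)) \<union> prepend_zigzag ` normal_words (Suc m)"
    by blast
next
  fix x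
  assume "x \<in> prepend_succ ` normal_words (Suc (Suc m)) \<union> prepend_zigzag ` normal_words (Suc m)"
  then show "x \<in> normal_words (Suc (Suc (Suc m)))"
  proof (elim UnE imageE)
    fix v assume x: "x = prepend_succ v" and "v \<in> normal_words (Suc (Suc m))"
    then obtain b u where "v = b # u" "b < 3" "u \<in> words (Suc m)" "normal v"
      by (cases v) (auto simp: normal_words_def words_def letters_def)
    then show ?thesis
      using normal_prepend_succ
      by (simp add: x normal_words_def Cons_in_words_iff succ3_less_3 prepend_succ_def)
  next
    fix v assume x: "x = prepend_zigzag v" and "v \<in> normal_words (Suc m)"
    then obtain c u where "v = c # u" "c < 3" "u \<in> words m" "normal v"
      by (cases v) (auto simp: normal_words_def words_def letters_def)
    then show ?thesis
      using normal_prepend_zigzag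
      by (simp add: x normal_words_def Cons_in_words_iff succ3_less_3 prepend_zigzag_def)
  qed
qed

lemma card_normal_words_Suc3:
  "card (normal_words (Suc (Suc (Suc m)))) =
     card (normal_words (Suc (Suc m))) + card (normal_words (Suc m))"
proof -
  have "finite (normal_words n)" for n
    using finite_words by (simp add: normal_words_def)
  moreover have "prepend_succ ` A \<inter> prepend_zigzag ` B = {}" for A B
    using prepend_succ_neq_prepend_zigzag by blast
  ultimately show ?thesis
    by (simp add: normal_words_Suc3_eq card_Un_disjoint card_image
        inj_on_prepend_succ inj_on_prepend_zigzag)
qed

lemma a_dim_rec:
  assumes "n \<ge> 3"
  shows "a_dim n = a_dim (n - 1) + a_dim (n - 2)"
proof -
  obtain m where "n = 3 + m"
    using le_Suc_ex[OF assms] by blast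
  then have "n = Suc (Suc (Suc m))"
    by simp
  then show ?thesis
    by (simp add: a_dim_eq_card_normal_words card_normal_words_Suc3)
qed

theorem mainTheorem20:
  fixes n :: nat
  assumes "n \<ge> 4"
  shows "int (a_dim n) = 2 * int (a_dim (n - 1)) - int (a_dim (n - 3))"
proof -
  have "a_dim n = a_dim (n - 1) + a_dim (n - 2)"
    using assms by (simp add: a_dim_rec)
  moreover have "a_dim (n - 1) = a_dim (n - 2) + a_dim (n - 3)"
    using assms a_dim_rec[of "n - 1"] by (simp add: numeral_eq_Suc)
  ultimately show ?thesis
    by simp
qed

end
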